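(* For every integer $k\ge2$ there exist a set $V$ with $|V|=k^2$ and a partial orientation $o$ on $V$ such that: (i) among any four distinct elements of $V$ some three $x,y,z$ satisfy $o(xyz)=0$; (ii) for all distinct $A,B,C,D\in V$, $o(ABD)=o(BCD)=o(CAD)=1$ implies $o(ABC)=1$; (iii) for all distinct $A,B,C,D\in V$, if $o(ABC)=o(ABD)=0$, $o(ACD)\ne0$ and $o(BCD)\ne0$, then $o(ACD)=o(BCD)$; and (iv) the largest subset $S\subseteq V$ such that $o(xyz)=0$ for all distinct $x,y,z\in S$ has exactly $2k-1$ elements.
   Context: A partial orientation on $V$ is a map $o$ from ordered triples of distinct elements of $V$ to $\{+1,0,-1\}$ with $o(uvw)=o(wuv)=o(vwu)=-o(uwv)=-o(vuw)=-o(wvu)$. *)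

theory Defs
  imports Main
begin

text \<open>Values outside triples of distinct elements of V are irrelevant.\<close>
definition partial_orientation :: "'a set \<Rightarrow> ('a \<Rightarrow> 'a \<Rightarrow> 'a \<Rightarrow> int) \<Rightarrow> bool" where
  "partial_orientation V ori \<longleftrightarrow>
     (\<forall>u\<in>V. \<forall>v\<in>V. \<forall>w\<in>V. distinct [u, v, w] \<longrightarrow>
        ori u v w \<in> {-1, 0, 1} \<and>
        ori u v w = ori w u v \<and> ori u v w = ori v w u \<and>
        ori u v w = - ori u w v \<and> ori u v w = - ori v u w \<and> ori u v w = - ori w v u)"

definition zero_subset :: "'a set \<Rightarrow> ('a \<Rightarrow> 'a \<Rightarrow> 'a \<Rightarrow> int) \<Rightarrow> 'a set \<Rightarrow> bool" where
  "zero_subset V ori S \<longleftrightarrow>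
     S \<subseteq> V \<and> (\<forall>x\<in>S. \<forall>y\<in>S. \<forall>z\<in>S. distinct [x, y, z] \<longrightarrow> ori x y z = 0)"

end

theory Submission
  imports Defs
begin

(* Plot the points (i, \<pi> i) for i < k^2, where \<pi> reverses each of the k blocks of k
   consecutive numbers. A triple gets a nonzero orientation only when its leftmost point lies
   strictly between the other two in height, and then the cyclic order of the heights.
   The leftmost of four points cannot lie between all three pairs of the others, which gives (i);
   heights on a line are in convex position as a cyclic order, so the hypothesis of (ii) never
   holds; (iii) is a case analysis on which of the four points is leftmost.
   A set is a zero set iff each of its points sees all later points on one side. Apart from its
   last point, it thus splits into points below all later ones and points above all later ones;
   each part together with the last point is a monotone subsequence of \<pi>. An increasing one
   meets every block at most once and a decreasing one stays inside a block, so a zero set has at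
   most 2k - 1 points; the first points of the first k - 1 blocks followed by the whole last block
   attain this. *)

definition strictly_between :: "'a::linorder \<Rightarrow> 'a \<Rightarrow> 'a \<Rightarrow> bool" where
  "strictly_between u a b \<longleftrightarrow> (a < u \<and> u < b) \<or> (b < u \<and> u < a)"

definition leftmost_between :: "('a::linorder \<Rightarrow> 'b::linorder) \<Rightarrow> 'a \<Rightarrow> 'a \<Rightarrow> 'a \<Rightarrow> bool" where
  "leftmost_between f x y z \<longleftrightarrow>
     (x < y \<and> x < z \<and> strictly_between (f x) (f y) (f z)) \<or>
     (y < x \<and> y < z \<and> strictly_between (f y) (f x) (f z)) \<or>
     (z < x \<and> z < y \<and> strictly_between (f z) (f x) (f y))"

definition cyclic_sign :: "'a::linorder \<Rightarrow> 'a \<Rightarrow> 'a \<Rightarrow> int" where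
  "cyclic_sign a b c = (if (a < b \<and> b < c) \<or> (b < c \<and> c < a) \<or> (c < a \<and> a < b) then 1 else -1)"

definition perm_orientation :: "('a::linorder \<Rightarrow> 'b::linorder) \<Rightarrow> 'a \<Rightarrow> 'a \<Rightarrow> 'a \<Rightarrow> int" where
  "perm_orientation f x y z = (if leftmost_between f x y z then cyclic_sign (f x) (f y) (f z) else 0)"

lemma strictly_between_commute: "strictly_between u a b \<longleftrightarrow> strictly_between u b a"
  unfolding strictly_between_def by auto

lemma leftmost_between_swap12: "leftmost_between f x y z \<longleftrightarrow> leftmost_between f y x z"
  unfolding leftmost_between_def by (auto simp: strictly_between_commute)

lemma leftmost_between_swap23: "leftmost_between f x y z \<longleftrightarrow> leftmost_between f x z y"
  unfolding leftmost_between_def by (auto simp: strictly_between_commute)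

lemma leftmost_between_iff:
  "x < y \<Longrightarrow> x < z \<Longrightarrow> leftmost_between f x y z \<longleftrightarrow> strictly_between (f x) (f y) (f z)"
  unfolding leftmost_between_def by auto

lemma leftmost_between_imp_distinct: "leftmost_between f x y z \<Longrightarrow> distinct [x, y, z]"
  unfolding leftmost_between_def strictly_between_def by auto

lemma cyclic_sign_swap12: "distinct [a, b, c] \<Longrightarrow> cyclic_sign a b c = - cyclic_sign b a c"
  unfolding cyclic_sign_def by auto

lemma cyclic_sign_swap23: "distinct [a, b, c] \<Longrightarrow> cyclic_sign a b c = - cyclic_sign a c b"
  unfolding cyclic_sign_def by auto

lemma cyclic_sign_not_all_pos:
  "distinct [a, b, c, d] \<Longrightarrow> \<not> (cyclic_sign a b d = 1 \<and> cyclic_sign b c d = 1 \<and> cyclic_sign c a d = 1)"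
  unfolding cyclic_sign_def by auto

lemma cyclic_sign_eq_if_same_side:
  "distinct [a, c, d] \<Longrightarrow> distinct [b, c, d] \<Longrightarrow>
    (strictly_between a c d \<longleftrightarrow> strictly_between b c d) \<Longrightarrow> cyclic_sign a c d = cyclic_sign b c d"
  unfolding cyclic_sign_def strictly_between_def by auto

lemma strictly_between_pigeonhole:
  "strictly_between u a b \<Longrightarrow> v \<noteq> u \<Longrightarrow> strictly_between u v a \<or> strictly_between u v b"
  unfolding strictly_between_def by auto

lemma strictly_between_not_outer: "strictly_between u a v \<Longrightarrow> \<not> strictly_between a u v"
  unfolding strictly_between_def by auto

lemma perm_orientation_swap12:
  "distinct [f x, f y, f z] \<Longrightarrow> perm_orientation f x y z = - perm_orientation f y x z"
  unfolding perm_orientation_def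
  using leftmost_between_swap12[of f x y z] cyclic_sign_swap12[of "f x" "f y" "f z"] by simp

lemma perm_orientation_swap23:
  "distinct [f x, f y, f z] \<Longrightarrow> perm_orientation f x y z = - perm_orientation f x z y"
  unfolding perm_orientation_def
  using leftmost_between_swap23[of f x y z] cyclic_sign_swap23[of "f x" "f y" "f z"] by simp

lemma perm_orientation_eq_0_iff: "perm_orientation f x y z = 0 \<longleftrightarrow> \<not> leftmost_between f x y z"
  unfolding perm_orientation_def cyclic_sign_def by auto

lemma partial_orientation_perm_orientation:
  assumes "inj_on f V"
  shows "partial_orientation V (perm_orientation f)"
  unfolding partial_orientation_def
proof (intro ballI impI)
  fix x y z assume "x \<in> V" "y \<in> V" "z \<in> V" "distinct [x, y, z]"
  then have "distinct [f x, f y, f z]" "distinct [f x, f z, f y]" "distinct [f y, f x, f z]"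
    using assms by (auto dest: inj_onD)
  then have "perm_orientation f x y z = - perm_orientation f y x z"
    "perm_orientation f x y z = - perm_orientation f x z y"
    "perm_orientation f x z y = - perm_orientation f z x y"
    "perm_orientation f y x z = - perm_orientation f y z x"
    "perm_orientation f y z x = - perm_orientation f z y x"
    by (auto intro: perm_orientation_swap12 perm_orientation_swap23)
  moreover have "perm_orientation f x y z \<in> {-1, 0, 1}"
    unfolding perm_orientation_def cyclic_sign_def by auto
  ultimately show "perm_orientation f x y z \<in> {-1, 0, 1} \<and>
    perm_orientation f x y z = perm_orientation f z x y \<and>
    perm_orientation f x y z = perm_orientation f y z x \<and>
    perm_orientation f x y z = - perm_orientation f x z y \<and>
    perm_orientation f x y z = - perm_orientation f y x z \<and>
    perm_orientation f x y z = - perm_orientation f z y x"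
    by simp
qed

lemma least_of_four:
  fixes a b c d :: "'a::linorder"
  assumes "distinct [a, b, c, d]"
  obtains "a < b" "a < c" "a < d" | "b < a" "b < c" "b < d" | "c < a" "c < b" "c < d"
    | "d < a" "d < b" "d < c"
proof -
  have "a < b \<or> b < a" "a < c \<or> c < a" "a < d \<or> d < a" "b < c \<or> c < b" "b < d \<or> d < b"
    "c < d \<or> d < c"
    using assms by (auto simp: neq_iff)
  then show thesis
    using that by (meson order.strict_trans)
qed

lemma no_four_leftmost_between:
  assumes "distinct [a, b, c, d]"
  shows "\<not> (leftmost_between f a b c \<and> leftmost_between f a b d \<and>
    leftmost_between f a c d \<and> leftmost_between f b c d)"
proof -
  have no_least: "\<not> (leftmost_between f x y z \<and> leftmost_between f x y w \<and> leftmost_between f x z w)"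
    if "x < y" "x < z" "x < w" for x y z w
    using that by (auto simp: leftmost_between_iff strictly_between_def)
  from assms show ?thesis
    by (cases rule: least_of_four)
      (metis no_least leftmost_between_swap12 leftmost_between_swap23)+
qed

lemma leftmost_between_same_side:
  assumes "distinct [A, B, C, D]" "distinct [f A, f B, f C, f D]"
    and "\<not> leftmost_between f A B C" "\<not> leftmost_between f A B D"
    and "leftmost_between f A C D" "leftmost_between f B C D"
  shows "strictly_between (f A) (f C) (f D) \<longleftrightarrow> strictly_between (f B) (f C) (f D)"
proof -
  have inner: "leftmost_between f x y z \<or> leftmost_between f x y w"
    if "x < y" "x < z" "x < w" "leftmost_between f x z w" "f y \<noteq> f x" for x y z w
    using that strictly_between_pigeonhole by (simp add: leftmost_between_iff)
  have outer: "\<not> strictly_between (f a) (f x) (f y)"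
    if "x < a" "x < y" "leftmost_between f a x y" for a x y
    using that strictly_between_not_outer leftmost_between_swap12
    by (metis leftmost_between_iff)
  from assms(1) show ?thesis
  proof (cases rule: least_of_four)
    case 1
    then show ?thesis using inner[of A B C D] assms by auto
  next
    case 2
    then show ?thesis using inner[of B A C D] assms leftmost_between_swap12 by fastforce
  next
    case 3
    then show ?thesis using outer[of C A D] outer[of C B D] assms by auto
  next
    case 4
    then show ?thesis
      using outer[of D A C] outer[of D B C] assms leftmost_between_swap23 strictly_between_commute
      by metis
  qed
qed

lemma perm_orientation_four_has_zero:
  fixes f :: "'a::linorder \<Rightarrow> 'b::linorder"
  shows "\<forall>a\<in>V. \<forall>b\<in>V. \<forall>c\<in>V. \<forall>d\<in>V. distinct [a, b, c, d] \<longrightarrow>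
    (\<exists>x\<in>{a, b, c, d}. \<exists>y\<in>{a, b, c, d}. \<exists>z\<in>{a, b, c, d}.
      distinct [x, y, z] \<and> perm_orientation f x y z = 0)"
proof (intro ballI impI)
  fix a b c d :: 'a assume abcd: "distinct [a, b, c, d]"
  then have "distinct [a, b, c]" "distinct [a, b, d]" "distinct [a, c, d]" "distinct [b, c, d]"
    by auto
  then show "\<exists>x\<in>{a, b, c, d}. \<exists>y\<in>{a, b, c, d}. \<exists>z\<in>{a, b, c, d}.
      distinct [x, y, z] \<and> perm_orientation f x y z = 0"
    using no_four_leftmost_between[OF abcd] unfolding perm_orientation_eq_0_iff by blast
qed

lemma perm_orientation_inside_triangle:
  assumes "inj_on f V"
  shows "\<forall>A\<in>V. \<forall>B\<in>V. \<forall>C\<in>V. \<forall>D\<in>V. distinct [A, B, C, D] \<longrightarrow>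
    perm_orientation f A B D = 1 \<and> perm_orientation f B C D = 1 \<and> perm_orientation f C A D = 1 \<longrightarrow>
    perm_orientation f A B C = 1"
proof (intro ballI impI)
  fix A B C D assume "A \<in> V" "B \<in> V" "C \<in> V" "D \<in> V" "distinct [A, B, C, D]"
    and pos: "perm_orientation f A B D = 1 \<and> perm_orientation f B C D = 1 \<and>
      perm_orientation f C A D = 1"
  then have "distinct [f A, f B, f C, f D]"
    using assms by (auto dest: inj_onD)
  with pos show "perm_orientation f A B C = 1"
    using cyclic_sign_not_all_pos unfolding perm_orientation_def by (auto split: if_splits)
qed

lemma perm_orientation_eq_if_zero_pair:
  assumes "inj_on f V"
  shows "\<forall>A\<in>V. \<forall>B\<in>V. \<forall>C\<in>V. \<forall>D\<in>V. distinct [A, B, C, D] \<longrightarrow>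
    perm_orientation f A B C = 0 \<and> perm_orientation f A B D = 0 \<and>
    perm_orientation f A C D \<noteq> 0 \<and> perm_orientation f B C D \<noteq> 0 \<longrightarrow>
    perm_orientation f A C D = perm_orientation f B C D"
proof (intro ballI impI)
  fix A B C D assume "A \<in> V" "B \<in> V" "C \<in> V" "D \<in> V" "distinct [A, B, C, D]"
    and zeros: "perm_orientation f A B C = 0 \<and> perm_orientation f A B D = 0 \<and>
      perm_orientation f A C D \<noteq> 0 \<and> perm_orientation f B C D \<noteq> 0"
  then have "distinct [f A, f B, f C, f D]"
    using assms by (auto dest: inj_onD)
  moreover have lb: "\<not> leftmost_between f A B C" "\<not> leftmost_between f A B D"
    "leftmost_between f A C D" "leftmost_between f B C D"
    using zeros by (simp_all add: perm_orientation_eq_0_iff)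
  ultimately have "strictly_between (f A) (f C) (f D) \<longleftrightarrow> strictly_between (f B) (f C) (f D)"
    using \<open>distinct [A, B, C, D]\<close> by (intro leftmost_between_same_side)
  with \<open>distinct [f A, f B, f C, f D]\<close>
  have "cyclic_sign (f A) (f C) (f D) = cyclic_sign (f B) (f C) (f D)"
    by (intro cyclic_sign_eq_if_same_side) auto
  with lb show "perm_orientation f A C D = perm_orientation f B C D"
    unfolding perm_orientation_def by simp
qed

definition later_one_sided :: "('a::linorder \<Rightarrow> 'b::linorder) \<Rightarrow> 'a set \<Rightarrow> bool" where
  "later_one_sided f S \<longleftrightarrow>
     (\<forall>x\<in>S. (\<forall>y\<in>S. x < y \<longrightarrow> f x < f y) \<or> (\<forall>y\<in>S. x < y \<longrightarrow> f y < f x))"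

lemma no_leftmost_between_iff_later_one_sided:
  assumes "inj_on f S"
  shows "(\<forall>x\<in>S. \<forall>y\<in>S. \<forall>z\<in>S. \<not> leftmost_between f x y z) \<longleftrightarrow> later_one_sided f S"
proof
  assume none: "\<forall>x\<in>S. \<forall>y\<in>S. \<forall>z\<in>S. \<not> leftmost_between f x y z"
  show "later_one_sided f S"
    unfolding later_one_sided_def
  proof (rule ballI, rule ccontr)
    fix x assume "x \<in> S" "\<not> ((\<forall>y\<in>S. x < y \<longrightarrow> f x < f y) \<or> (\<forall>y\<in>S. x < y \<longrightarrow> f y < f x))"
    then obtain y z where "y \<in> S" "z \<in> S" "x < y" "x < z" "\<not> f x < f y" "\<not> f z < f x"
      by blast
    moreover have "f y \<noteq> f x" "f z \<noteq> f x"
      using calculation \<open>x \<in> S\<close> assms by (auto dest: inj_onD)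
    ultimately have "y \<in> S" "z \<in> S" "x < y" "x < z" "f y < f x" "f x < f z"
      by auto
    then have "leftmost_between f x y z"
      by (simp add: leftmost_between_iff strictly_between_def)
    then show False
      using none \<open>x \<in> S\<close> \<open>y \<in> S\<close> \<open>z \<in> S\<close> by blast
  qed
next
  assume one_sided: "later_one_sided f S"
  have "\<not> strictly_between (f m) (f a) (f b)" if "m \<in> S" "a \<in> S" "b \<in> S" "m < a" "m < b" for m a b
    using one_sided that unfolding later_one_sided_def strictly_between_def
    by (meson order.asym)
  then show "\<forall>x\<in>S. \<forall>y\<in>S. \<forall>z\<in>S. \<not> leftmost_between f x y z"
    unfolding leftmost_between_def by blast
qed

lemma zero_subset_perm_orientation_iff:
  assumes "inj_on f V"
  shows "zero_subset V (perm_orientation f) S \<longleftrightarrow> S \<subseteq> V \<and> later_one_sided f S"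
proof -
  have "(\<forall>x\<in>S. \<forall>y\<in>S. \<forall>z\<in>S. distinct [x, y, z] \<longrightarrow> perm_orientation f x y z = 0) \<longleftrightarrow>
      (\<forall>x\<in>S. \<forall>y\<in>S. \<forall>z\<in>S. \<not> leftmost_between f x y z)"
    unfolding perm_orientation_eq_0_iff using leftmost_between_imp_distinct by blast
  moreover have "S \<subseteq> V \<Longrightarrow> inj_on f S"
    using assms inj_on_subset by blast
  ultimately show ?thesis
    unfolding zero_subset_def using no_leftmost_between_iff_later_one_sided by blast
qed

lemma later_one_sided_split:
  assumes "finite S" "S \<noteq> {}" "later_one_sided f S"
  obtains U W where "U \<subseteq> S" "W \<subseteq> S" "strict_mono_on U f" "strict_antimono_on W f"
    "card S < card U + card W"
proof
  define U where "U = {x\<in>S. \<forall>y\<in>S. x < y \<longrightarrow> f x < f y}"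
  define W where "W = {x\<in>S. \<forall>y\<in>S. x < y \<longrightarrow> f y < f x}"
  show "U \<subseteq> S" "W \<subseteq> S"
    unfolding U_def W_def by auto
  show "strict_mono_on U f" "strict_antimono_on W f"
    unfolding U_def W_def by (auto intro: strict_mono_onI simp: monotone_on_def)
  have "S = U \<union> W"
    using assms(3) unfolding later_one_sided_def U_def W_def by blast
  moreover have "Max S \<in> U \<inter> W"
    using assms(1,2) unfolding U_def W_def by auto
  with \<open>U \<subseteq> S\<close> \<open>W \<subseteq> S\<close> have "card (U \<inter> W) > 0"
    using assms(1) by (auto simp: card_gt_0_iff intro: finite_subset)
  ultimately show "card S < card U + card W"
    using card_Un_Int[of U W] \<open>U \<subseteq> S\<close> \<open>W \<subseteq> S\<close> assms(1) finite_subset by fastforce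
qed

definition block_reverse :: "nat \<Rightarrow> nat \<Rightarrow> nat" where
  "block_reverse k p = p div k * k + (k - 1 - p mod k)"

lemma block_reverse_div: "0 < k \<Longrightarrow> block_reverse k p div k = p div k"
  unfolding block_reverse_def by simp

lemma block_reverse_mod: "0 < k \<Longrightarrow> block_reverse k p mod k = k - 1 - p mod k"
  unfolding block_reverse_def by simp

lemma block_reverse_block_reverse:
  assumes "0 < k"
  shows "block_reverse k (block_reverse k p) = p"
proof -
  have "block_reverse k (block_reverse k p) = p div k * k + (k - 1 - (k - 1 - p mod k))"
    unfolding block_reverse_def [of k "block_reverse k p"] block_reverse_div[OF assms]
      block_reverse_mod[OF assms] ..
  also have "k - 1 - (k - 1 - p mod k) = p mod k"
    using mod_less_divisor[OF assms, of p] by linarith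
  finally show ?thesis
    by simp
qed

lemma inj_block_reverse: "0 < k \<Longrightarrow> inj (block_reverse k)"
  by (metis block_reverse_block_reverse injI)

lemma block_reverse_less_of_div_less:
  assumes "p div k < q div k"
  shows "block_reverse k p < block_reverse k q"
proof -
  have "block_reverse k p < Suc (p div k) * k"
    unfolding block_reverse_def using assms by (cases k) auto
  also have "\<dots> \<le> q div k * k"
    using assms by (intro mult_le_mono1) simp
  also have "\<dots> \<le> block_reverse k q"
    unfolding block_reverse_def by simp
  finally show ?thesis .
qed

lemma block_reverse_less_of_same_block:
  assumes "0 < k" "p div k = q div k" "p < q"
  shows "block_reverse k q < block_reverse k p"
proof -
  have "p mod k < q mod k"
    using assms(2,3) div_mult_mod_eq[of p k] div_mult_mod_eq[of q k] by (metis add_less_cancel_left)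
  moreover have "q mod k < k"
    using assms(1) by simp
  ultimately show ?thesis
    unfolding block_reverse_def using assms(2) by simp
qed

lemma div_less_of_mod_eq:
  fixes x y k :: nat
  assumes "x < y" "x mod k = y mod k"
  shows "x div k < y div k"
proof (rule ccontr)
  assume "\<not> x div k < y div k"
  then have "y div k * k \<le> x div k * k"
    by simp
  then have "y \<le> x"
    using assms(2) div_mult_mod_eq[of x k] div_mult_mod_eq[of y k] by linarith
  then show False
    using assms(1) by simp
qed

lemma card_le_if_strict_mono_on_block_reverse:
  assumes "0 < k" "U \<subseteq> {..<k^2}" "strict_mono_on U (block_reverse k)"
  shows "card U \<le> k"
proof -
  have "inj_on (\<lambda>x. x div k) U"
  proof (rule inj_onI, rule ccontr)
    fix x y assume "x \<in> U" "y \<in> U" "x div k = y div k" "x \<noteq> y"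
    then show False
      using assms(1,3) block_reverse_less_of_same_block strict_mono_onD
      by (metis linorder_neqE order.asym)
  qed
  moreover have "(\<lambda>x. x div k) ` U \<subseteq> {..<k}"
    using assms(2) by (auto simp: power2_eq_square less_mult_imp_div_less)
  ultimately show ?thesis
    using card_inj_on_le[of _ U "{..<k}"] by simp
qed

lemma card_le_if_strict_antimono_on_block_reverse:
  assumes "0 < k" "W \<subseteq> {..<k^2}" "strict_antimono_on W (block_reverse k)"
  shows "card W \<le> k"
proof -
  have "inj_on (\<lambda>x. x mod k) W"
  proof (rule inj_onI, rule ccontr)
    fix x y assume "x \<in> W" "y \<in> W" "x mod k = y mod k" "x \<noteq> y"
    then show False
      using assms(3) div_less_of_mod_eq block_reverse_less_of_div_less
      unfolding monotone_on_def by (metis linorder_neqE order.asym)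
  qed
  moreover have "(\<lambda>x. x mod k) ` W \<subseteq> {..<k}"
    using assms(1) by auto
  ultimately show ?thesis
    using card_inj_on_le[of _ W "{..<k}"] by simp
qed

definition extremal_zero_set :: "nat \<Rightarrow> nat set" where
  "extremal_zero_set k = (\<lambda>i. i * k) ` {..<k - 1} \<union> {(k - 1) * k..<k^2}"

lemma div_eq_of_last_block:
  fixes k x :: nat
  assumes "0 < k" "x \<in> {(k - 1) * k..<k^2}"
  shows "x div k = k - 1"
proof (rule div_nat_eqI)
  show "k * (k - 1) \<le> x" "x < k * Suc (k - 1)"
    using assms by (auto simp: power2_eq_square mult.commute)
qed

lemma extremal_zero_set_subset: "extremal_zero_set k \<subseteq> {..<k^2}"
proof -
  have "i * k < k^2" if "i < k - 1" for i
  proof -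
    have "i < k" "0 < k"
      using that by linarith+
    then show ?thesis
      by (simp add: power2_eq_square)
  qed
  then show ?thesis
    unfolding extremal_zero_set_def by auto
qed

lemma card_extremal_zero_set:
  assumes "0 < k"
  shows "card (extremal_zero_set k) = 2 * k - 1"
proof -
  have "(\<lambda>i. i * k) ` {..<k - 1} \<inter> {(k - 1) * k..<k^2} = {}"
    by auto
  moreover have "card ((\<lambda>i. i * k) ` {..<k - 1}) = k - 1"
    using assms by (simp add: card_image inj_on_def)
  moreover have "card {(k - 1) * k..<k^2} = k"
    using assms by (simp add: power2_eq_square diff_mult_distrib)
  ultimately show ?thesis
    using assms unfolding extremal_zero_set_def by (simp add: card_Un_disjoint)
qed

lemma later_one_sided_extremal_zero_set:
  assumes "0 < k"
  shows "later_one_sided (block_reverse k) (extremal_zero_set k)"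
  unfolding later_one_sided_def
proof
  fix x assume x: "x \<in> extremal_zero_set k"
  show "(\<forall>y\<in>extremal_zero_set k. x < y \<longrightarrow> block_reverse k x < block_reverse k y) \<or>
    (\<forall>y\<in>extremal_zero_set k. x < y \<longrightarrow> block_reverse k y < block_reverse k x)"
  proof (cases "x < (k - 1) * k")
    case True
    have "x div k < y div k" if "y \<in> extremal_zero_set k" "x < y" for y
      using x that True assms div_eq_of_last_block[OF assms, of y]
      unfolding extremal_zero_set_def by auto
    then show ?thesis
      using block_reverse_less_of_div_less by blast
  next
    case False
    then have "x \<in> {(k - 1) * k..<k^2}"
      using x extremal_zero_set_subset unfolding extremal_zero_set_def by auto
    moreover have "y \<in> {(k - 1) * k..<k^2}" if "y \<in> extremal_zero_set k" "x < y" for y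
      using that False extremal_zero_set_subset unfolding extremal_zero_set_def by auto
    ultimately show ?thesis
      using block_reverse_less_of_same_block[OF assms] div_eq_of_last_block[OF assms] by auto
  qed
qed

lemma card_le_if_later_one_sided_block_reverse:
  assumes "0 < k" "S \<subseteq> {..<k^2}" "later_one_sided (block_reverse k) S"
  shows "card S \<le> 2 * k - 1"
proof (cases "S = {}")
  case False
  moreover have "finite S"
    using assms(2) finite_subset by blast
  ultimately obtain U W where "U \<subseteq> S" "W \<subseteq> S" "strict_mono_on U (block_reverse k)"
    "strict_antimono_on W (block_reverse k)" "card S < card U + card W"
    using assms(3) later_one_sided_split by blast
  moreover have "card U \<le> k" "card W \<le> k"
    using calculation assms(1,2) card_le_if_strict_mono_on_block_reverse
      card_le_if_strict_antimono_on_block_reverse by (meson order_trans)+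
  ultimately show ?thesis
    by linarith
qed simp

theorem claim7:
  fixes k :: nat
  assumes "k \<ge> 2"
  shows "\<exists>(V :: nat set) ori. finite V \<and> card V = k ^ 2 \<and> partial_orientation V ori \<and>
    (\<forall>a\<in>V. \<forall>b\<in>V. \<forall>c\<in>V. \<forall>d\<in>V. distinct [a, b, c, d] \<longrightarrow>
       (\<exists>x\<in>{a, b, c, d}. \<exists>y\<in>{a, b, c, d}. \<exists>z\<in>{a, b, c, d}. distinct [x, y, z] \<and> ori x y z = 0)) \<and>
    (\<forall>A\<in>V. \<forall>B\<in>V. \<forall>C\<in>V. \<forall>D\<in>V. distinct [A, B, C, D] \<longrightarrow>
       ori A B D = 1 \<and> ori B C D = 1 \<and> ori C A D = 1 \<longrightarrow> ori A B C = 1) \<and>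
    (\<forall>A\<in>V. \<forall>B\<in>V. \<forall>C\<in>V. \<forall>D\<in>V. distinct [A, B, C, D] \<longrightarrow>
       ori A B C = 0 \<and> ori A B D = 0 \<and> ori A C D \<noteq> 0 \<and> ori B C D \<noteq> 0 \<longrightarrow> ori A C D = ori B C D) \<and>
    (\<exists>S. zero_subset V ori S \<and> card S = 2 * k - 1) \<and>
    (\<forall>S. zero_subset V ori S \<longrightarrow> card S \<le> 2 * k - 1)"
proof -
  have k: "0 < k"
    using assms by simp
  let ?V = "{..<k^2}" and ?f = "block_reverse k"
  have inj: "inj_on ?f ?V"
    using inj_block_reverse[OF k] by (rule inj_on_subset) simp
  have zero_subset_iff:
    "zero_subset ?V (perm_orientation ?f) S \<longleftrightarrow> S \<subseteq> ?V \<and> later_one_sided ?f S" for S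
    using zero_subset_perm_orientation_iff[OF inj] .
  have attained: "\<exists>S. zero_subset ?V (perm_orientation ?f) S \<and> card S = 2 * k - 1"
    using zero_subset_iff extremal_zero_set_subset later_one_sided_extremal_zero_set[OF k]
      card_extremal_zero_set[OF k] by blast
  have bounded: "\<forall>S. zero_subset ?V (perm_orientation ?f) S \<longrightarrow> card S \<le> 2 * k - 1"
    using zero_subset_iff card_le_if_later_one_sided_block_reverse[OF k] by blast
  show ?thesis
    by (rule exI[of _ ?V], rule exI[of _ "perm_orientation ?f"])
      (intro conjI finite_lessThan card_lessThan partial_orientation_perm_orientation[OF inj]
        perm_orientation_four_has_zero perm_orientation_inside_triangle[OF inj]
        perm_orientation_eq_if_zero_pair[OF inj] attained bounded)
qed

end
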